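(* Let $\lambda\neq0$ be a constant and let $\phi(x,t)$ be a smooth function with $\phi_x\neq0$ on a connected open domain satisfying $\{\phi;x\}_t+\frac4\lambda\big(\frac{\phi_t}{\phi_x}\big)_x=0$. Set $p=\frac{\phi_t}{\lambda\phi_x}$ and $U=\frac12\{\phi;x\}+\frac1\lambda$. Then a function $V(x,t)$ solves $$V_{xx}+\Big(U-\frac1\lambda\Big)V=0,\qquad V_t=\lambda\Big(pV_x-\frac12 p_xV\Big)$$ if and only if $V=\dfrac{A\phi+B}{\sqrt{\phi_x}}$ for constants $A,B$ (fixed smooth branch of the square root); the nontrivial solutions correspond to $(A,B)\neq(0,0)$.
   Context: The Schwarzian derivative of a function $\phi(x,t)$ with $\phi_x\neq0$ is $\{\phi;x\}=\frac{\phi_{xxx}}{\phi_x}-\frac32\frac{\phi_{xx}^2}{\phi_x^2}$. All functions are smooth. *)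

theory Defs
  imports "HOL-Analysis.Analysis"
begin

definition px :: "(real \<times> real \<Rightarrow> real) \<Rightarrow> real \<times> real \<Rightarrow> real" where
  "px f = (\<lambda>(x, t). deriv (\<lambda>y. f (y, t)) x)"

definition pt :: "(real \<times> real \<Rightarrow> real) \<Rightarrow> real \<times> real \<Rightarrow> real" where
  "pt f = (\<lambda>(x, t). deriv (\<lambda>s. f (x, s)) t)"

fun dop :: "bool list \<Rightarrow> (real \<times> real \<Rightarrow> real) \<Rightarrow> real \<times> real \<Rightarrow> real" where
  "dop [] f = f"
| "dop (b # w) f = (if b then px else pt) (dop w f)"

definition smooth2_on :: "(real \<times> real) set \<Rightarrow> (real \<times> real \<Rightarrow> real) \<Rightarrow> bool" where
  "smooth2_on D f \<longleftrightarrow> (\<forall>w. continuous_on D (dop w f) \<and>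
     (\<forall>p\<in>D. (\<lambda>y. dop w f (y, snd p)) differentiable (at (fst p)) \<and>
             (\<lambda>s. dop w f (fst p, s)) differentiable (at (snd p))))"

definition schwarzian :: "(real \<times> real \<Rightarrow> real) \<Rightarrow> real \<times> real \<Rightarrow> real" where
  "schwarzian \<phi> = (\<lambda>p. px (px (px \<phi>)) p / px \<phi> p - 3/2 * (px (px \<phi>) p)\<^sup>2 / (px \<phi> p)\<^sup>2)"

end

theory Submission
  imports Defs
begin

(*
  Put R = sqrt |phi_x| and c = phi_t / phi_x, so that lam p = c. The gauge W = V R turns the
  Lax pair into first-order conditions: with S the Schwarzian,
    (W_x / phi_x)_x = (R / phi_x) (V_xx + S V / 2),   W_t - c W_x = R (V_t - c V_x + c_x V / 2).
  Hence V solves the pair iff a = W_x / phi_x satisfies a_x = 0 and W_t = c W_x. Then also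
  a_t = 0, because W_xt = W_tx and phi_xt = (c phi_x)_x; so a is a constant A on the connected
  domain, and W - A phi, whose partials vanish as well, is a constant B.
*)

definition slice :: "bool \<Rightarrow> real \<times> real \<Rightarrow> real \<Rightarrow> real \<times> real" where
  "slice b q s = (if b then (s, snd q) else (fst q, s))"

definition coord :: "bool \<Rightarrow> real \<times> real \<Rightarrow> real" where
  "coord b q = (if b then fst q else snd q)"

definition partial :: "bool \<Rightarrow> (real \<times> real \<Rightarrow> real) \<Rightarrow> real \<times> real \<Rightarrow> real" where
  "partial b = (if b then px else pt)"

lemma dop_Cons: "dop (b # w) f = partial b (dop w f)"
  by (simp add: partial_def)

lemma dop_append: "dop (w @ [b]) f = dop w (partial b f)"
  by (induction w) (auto simp: partial_def)

lemma slice_coord [simp]: "slice b q (coord b q) = q"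
  by (simp add: slice_def coord_def)

lemma continuous_on_slice: "continuous_on A (slice b q)"
  unfolding slice_def by (cases b) (auto intro!: continuous_intros)

lemma partial_eq_deriv: "partial b f q = deriv (\<lambda>s. f (slice b q s)) (coord b q)"
  by (cases q) (simp add: partial_def slice_def coord_def px_def pt_def)

lemma smooth2_on_iff_slices:
  "smooth2_on D f \<longleftrightarrow> (\<forall>w. continuous_on D (dop w f) \<and>
     (\<forall>q\<in>D. \<forall>b. (\<lambda>s. dop w f (slice b q s)) differentiable (at (coord b q))))"
  by (simp add: smooth2_on_def slice_def coord_def all_bool_eq)

lemma has_partial:
  "(\<lambda>s. f (slice b q s)) differentiable (at (coord b q)) \<Longrightarrow>
   ((\<lambda>s. f (slice b q s)) has_real_derivative partial b f q) (at (coord b q))"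
  unfolding partial_eq_deriv by (simp add: DERIV_deriv_iff_real_differentiable)

lemma partial_eqI:
  "((\<lambda>s. f (slice b q s)) has_real_derivative d) (at (coord b q)) \<Longrightarrow> partial b f q = d"
  unfolding partial_eq_deriv by (rule DERIV_imp_deriv)

lemma eventually_slice_in_open:
  assumes "open D" "q \<in> D"
  shows "eventually (\<lambda>s. slice b q s \<in> D) (nhds (coord b q))"
proof -
  have "open (slice b q -` D)"
    using open_vimage[OF assms(1) continuous_on_slice] .
  moreover have "coord b q \<in> slice b q -` D"
    using assms(2) by simp
  ultimately show ?thesis
    using eventually_nhds_in_open by fastforce
qed

lemma slice_derivative_cong:
  assumes "open D" "q \<in> D" "\<And>r. r \<in> D \<Longrightarrow> f r = g r"
  shows "((\<lambda>s. f (slice b q s)) has_real_derivative d) (at (coord b q)) \<longleftrightarrow>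
         ((\<lambda>s. g (slice b q s)) has_real_derivative d) (at (coord b q))"
  by (rule DERIV_cong_ev[OF refl eventually_mono[OF eventually_slice_in_open[OF assms(1,2)]] refl])
     (use assms(3) in auto)

lemma partial_cong:
  assumes "open D" "q \<in> D" "\<And>r. r \<in> D \<Longrightarrow> f r = g r"
  shows "partial b f q = partial b g q"
  unfolding partial_eq_deriv
  by (rule deriv_cong_ev[OF eventually_mono[OF eventually_slice_in_open[OF assms(1,2)]]])
     (use assms(3) in auto)

lemma differentiable_slice_cong:
  fixes f g :: "real \<times> real \<Rightarrow> real"
  assumes "open D" "q \<in> D" "\<And>r. r \<in> D \<Longrightarrow> f r = g r"
  shows "(\<lambda>s. f (slice b q s)) differentiable (at (coord b q)) \<longleftrightarrow>
         (\<lambda>s. g (slice b q s)) differentiable (at (coord b q))"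
proof -
  have "\<And>d. ((\<lambda>s. f (slice b q s)) has_real_derivative d) (at (coord b q)) \<longleftrightarrow>
         ((\<lambda>s. g (slice b q s)) has_real_derivative d) (at (coord b q))"
    by (rule slice_derivative_cong[OF assms])
  then show ?thesis
    unfolding real_differentiable_def by blast
qed

lemma smooth2_on_partial: "smooth2_on D f \<Longrightarrow> smooth2_on D (partial b f)"
  unfolding smooth2_on_iff_slices by (metis dop_append)

definition has_slice_derivatives ::
    "(real \<times> real) set \<Rightarrow> (real \<times> real \<Rightarrow> real) \<Rightarrow> (bool \<Rightarrow> real \<times> real \<Rightarrow> real) \<Rightarrow> bool" where
  "has_slice_derivatives D f f' \<longleftrightarrow>
     (\<forall>q\<in>D. \<forall>b. ((\<lambda>s. f (slice b q s)) has_real_derivative f' b q) (at (coord b q)))"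

definition has_partials_in ::
    "(real \<times> real) set \<Rightarrow> ((real \<times> real \<Rightarrow> real) \<Rightarrow> bool) \<Rightarrow> (real \<times> real \<Rightarrow> real) \<Rightarrow> bool" where
  "has_partials_in D P f \<longleftrightarrow>
     continuous_on D f \<and> (\<exists>f'. (\<forall>b. P (f' b)) \<and> has_slice_derivatives D f f')"

lemma has_partials_inE:
  assumes "has_partials_in D P f"
  obtains f' where "continuous_on D f" "\<And>b. P (f' b)"
    "\<And>q b. q \<in> D \<Longrightarrow> ((\<lambda>s. f (slice b q s)) has_real_derivative f' b q) (at (coord b q))"
  using assms unfolding has_partials_in_def has_slice_derivatives_def by blast

lemma smooth2_on_coinduct:
  assumes "open D" and "P f" and step: "\<And>g. P g \<Longrightarrow> has_partials_in D P g"
  shows "smooth2_on D f"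
proof -
  have dop_in_P: "\<exists>h. P h \<and> (\<forall>q\<in>D. dop w f q = h q)" for w
  proof (induction w)
    case Nil
    then show ?case using \<open>P f\<close> by auto
  next
    case (Cons b w)
    then obtain h where "P h" and h: "\<forall>q\<in>D. dop w f q = h q" by blast
    then obtain h' where "P (h' b)"
      and h': "\<And>q. q \<in> D \<Longrightarrow> ((\<lambda>s. h (slice b q s)) has_real_derivative h' b q) (at (coord b q))"
      using step by (metis has_partials_inE)
    have "partial b (dop w f) q = h' b q" if "q \<in> D" for q
      using partial_cong[OF \<open>open D\<close> that] h partial_eqI[OF h'[OF that]] that by metis
    then show ?case using \<open>P (h' b)\<close> unfolding dop_Cons by blast
  qed
  show ?thesis
    unfolding smooth2_on_iff_slices
  proof (intro allI conjI ballI)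
    fix w
    obtain h where "P h" and h: "\<forall>q\<in>D. dop w f q = h q" using dop_in_P by blast
    then obtain h' where "continuous_on D h"
      and h': "\<And>q b. q \<in> D \<Longrightarrow> ((\<lambda>s. h (slice b q s)) has_real_derivative h' b q) (at (coord b q))"
      using step by (metis has_partials_inE)
    then show "continuous_on D (dop w f)"
      using continuous_on_cong[OF refl, of D "dop w f" h] h by auto
    show "(\<lambda>s. dop w f (slice b q s)) differentiable (at (coord b q))" if "q \<in> D" for q b
      using differentiable_slice_cong[OF \<open>open D\<close> that, of "dop w f" h] h h'[OF that] that
      unfolding real_differentiable_def by blast
  qed
qed

lemma DERIV_sqrt_abs:
  fixes y :: real
  assumes "y \<noteq> 0"
  shows "((\<lambda>z. sqrt \<bar>z\<bar>) has_real_derivative sqrt \<bar>y\<bar> / (2 * y)) (at y)"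
proof (cases "y > 0")
  case True
  have "inverse (sqrt y) / 2 = sqrt \<bar>y\<bar> / (2 * y)"
    using True real_sqrt_mult_self[of y] by (simp add: field_simps)
  then have "(sqrt has_real_derivative sqrt \<bar>y\<bar> / (2 * y)) (at y)"
    using DERIV_real_sqrt[OF True] by (simp add: mult.commute)
  then show ?thesis
    by (rule has_field_derivative_transform_within_open[where S = "{0<..}"]) (use True in auto)
next
  case False
  then have "y < 0" using assms by simp
  have "inverse (sqrt (- y)) / 2 * - 1 = sqrt \<bar>y\<bar> / (2 * y)"
    using \<open>y < 0\<close> real_sqrt_mult_self[of "- y"] by (simp add: field_simps)
  then have "((\<lambda>z. sqrt (- z)) has_real_derivative sqrt \<bar>y\<bar> / (2 * y)) (at y)"
    using DERIV_chain2[OF DERIV_real_sqrt DERIV_minus[OF DERIV_ident], of y] \<open>y < 0\<close> by simp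
  then show ?thesis
    by (rule has_field_derivative_transform_within_open[where S = "{..<0}"]) (use \<open>y < 0\<close> in auto)
qed

lemma has_slice_derivatives_add:
  "has_slice_derivatives D f f' \<Longrightarrow> has_slice_derivatives D g g' \<Longrightarrow>
   has_slice_derivatives D (\<lambda>q. f q + g q) (\<lambda>b q. f' b q + g' b q)"
  unfolding has_slice_derivatives_def by (auto intro: DERIV_add)

lemma has_slice_derivatives_diff:
  "has_slice_derivatives D f f' \<Longrightarrow> has_slice_derivatives D g g' \<Longrightarrow>
   has_slice_derivatives D (\<lambda>q. f q - g q) (\<lambda>b q. f' b q - g' b q)"
  unfolding has_slice_derivatives_def by (auto intro: DERIV_diff)

lemma has_slice_derivatives_mult:
  "has_slice_derivatives D f f' \<Longrightarrow> has_slice_derivatives D g g' \<Longrightarrow>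
   has_slice_derivatives D (\<lambda>q. f q * g q) (\<lambda>b q. f' b q * g q + f q * g' b q)"
  unfolding has_slice_derivatives_def by (auto intro!: derivative_eq_intros)

lemma has_slice_derivatives_divide:
  "has_slice_derivatives D f f' \<Longrightarrow> has_slice_derivatives D g g' \<Longrightarrow> (\<And>q. q \<in> D \<Longrightarrow> g q \<noteq> 0) \<Longrightarrow>
   has_slice_derivatives D (\<lambda>q. f q / g q) (\<lambda>b q. (f' b q * g q - f q * g' b q) / (g q * g q))"
  unfolding has_slice_derivatives_def by (auto intro!: derivative_eq_intros simp: field_simps)

lemma has_slice_derivatives_sqrt_abs:
  "has_slice_derivatives D f f' \<Longrightarrow> (\<And>q. q \<in> D \<Longrightarrow> f q \<noteq> 0) \<Longrightarrow>
   has_slice_derivatives D (\<lambda>q. sqrt \<bar>f q\<bar>) (\<lambda>b q. sqrt \<bar>f q\<bar> * f' b q / (f q + f q))"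
  unfolding has_slice_derivatives_def
  by (auto intro!: DERIV_chain2[OF DERIV_sqrt_abs, THEN DERIV_cong] simp: field_simps)

inductive smooth2_alg :: "(real \<times> real) set \<Rightarrow> (real \<times> real \<Rightarrow> real) \<Rightarrow> bool" for D where
  smooth: "smooth2_on D f \<Longrightarrow> smooth2_alg D f"
| add: "smooth2_alg D f \<Longrightarrow> smooth2_alg D g \<Longrightarrow> smooth2_alg D (\<lambda>q. f q + g q)"
| diff: "smooth2_alg D f \<Longrightarrow> smooth2_alg D g \<Longrightarrow> smooth2_alg D (\<lambda>q. f q - g q)"
| mult: "smooth2_alg D f \<Longrightarrow> smooth2_alg D g \<Longrightarrow> smooth2_alg D (\<lambda>q. f q * g q)"
| divide: "smooth2_alg D f \<Longrightarrow> smooth2_alg D g \<Longrightarrow> (\<And>q. q \<in> D \<Longrightarrow> g q \<noteq> 0) \<Longrightarrow>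
    smooth2_alg D (\<lambda>q. f q / g q)"
| sqrt_abs: "smooth2_alg D f \<Longrightarrow> (\<And>q. q \<in> D \<Longrightarrow> f q \<noteq> 0) \<Longrightarrow>
    smooth2_alg D (\<lambda>q. sqrt \<bar>f q\<bar>)"

lemma has_partials_in_smooth2_alg:
  assumes "smooth2_alg D f"
  shows "has_partials_in D (smooth2_alg D) f"
  using assms unfolding has_partials_in_def
proof induction
  case (smooth f)
  then have "continuous_on D (dop [] f) \<and>
      (\<forall>q\<in>D. \<forall>b. (\<lambda>s. dop [] f (slice b q s)) differentiable (at (coord b q)))"
    unfolding smooth2_on_iff_slices by blast
  then show ?case
    using smooth2_alg.smooth[OF smooth2_on_partial[OF smooth]]
    by (auto intro!: exI[of _ "\<lambda>b. partial b f"] has_partial simp: has_slice_derivatives_def)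
next
  case (add f g)
  then obtain f' g' where "\<forall>b. smooth2_alg D (f' b)" "has_slice_derivatives D f f'"
    "\<forall>b. smooth2_alg D (g' b)" "has_slice_derivatives D g g'" by blast
  with add show ?case
    by (intro conjI exI[of _ "\<lambda>b q. f' b q + g' b q"] continuous_on_add has_slice_derivatives_add)
      (auto intro: smooth2_alg.add)
next
  case (diff f g)
  then obtain f' g' where "\<forall>b. smooth2_alg D (f' b)" "has_slice_derivatives D f f'"
    "\<forall>b. smooth2_alg D (g' b)" "has_slice_derivatives D g g'" by blast
  with diff show ?case
    by (intro conjI exI[of _ "\<lambda>b q. f' b q - g' b q"] continuous_on_diff has_slice_derivatives_diff)
      (auto intro: smooth2_alg.diff)
next
  case (mult f g)
  then obtain f' g' where "\<forall>b. smooth2_alg D (f' b)" "has_slice_derivatives D f f'"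
    "\<forall>b. smooth2_alg D (g' b)" "has_slice_derivatives D g g'" by blast
  with mult show ?case
    by (intro conjI exI[of _ "\<lambda>b q. f' b q * g q + f q * g' b q"] continuous_on_mult
        has_slice_derivatives_mult allI smooth2_alg.add smooth2_alg.mult) auto
next
  case (divide f g)
  then obtain f' g' where "\<forall>b. smooth2_alg D (f' b)" "has_slice_derivatives D f f'"
    "\<forall>b. smooth2_alg D (g' b)" "has_slice_derivatives D g g'" by blast
  with divide show ?case
    by (intro conjI exI[of _ "\<lambda>b q. (f' b q * g q - f q * g' b q) / (g q * g q)"]
        continuous_on_divide has_slice_derivatives_divide)
      (auto intro!: smooth2_alg.divide smooth2_alg.diff smooth2_alg.mult)
next
  case (sqrt_abs f)
  then obtain f' where "\<forall>b. smooth2_alg D (f' b)" "has_slice_derivatives D f f'" by blast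
  with sqrt_abs show ?case
    by (intro conjI exI[of _ "\<lambda>b q. sqrt \<bar>f q\<bar> * f' b q / (f q + f q)"]
        continuous_on_real_sqrt continuous_on_rabs has_slice_derivatives_sqrt_abs allI
        smooth2_alg.divide smooth2_alg.mult smooth2_alg.add smooth2_alg.sqrt_abs) auto
qed

lemma smooth2_alg_imp_smooth2_on: "open D \<Longrightarrow> smooth2_alg D f \<Longrightarrow> smooth2_on D f"
  by (rule smooth2_on_coinduct[where P = "smooth2_alg D"]) (auto intro: has_partials_in_smooth2_alg)

lemma smooth2_on_const: "open D \<Longrightarrow> smooth2_on D (\<lambda>q. c)"
  by (rule smooth2_on_coinduct[where P = "\<lambda>g. \<exists>c. g = (\<lambda>q. c)"])
     (auto simp: has_partials_in_def has_slice_derivatives_def intro!: exI[of _ "\<lambda>b q. 0"])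

lemma smooth2_on_diff:
  "open D \<Longrightarrow> smooth2_on D f \<Longrightarrow> smooth2_on D g \<Longrightarrow> smooth2_on D (\<lambda>q. f q - g q)"
  by (rule smooth2_alg_imp_smooth2_on) (auto intro: smooth2_alg.intros)

lemma smooth2_on_mult:
  "open D \<Longrightarrow> smooth2_on D f \<Longrightarrow> smooth2_on D g \<Longrightarrow> smooth2_on D (\<lambda>q. f q * g q)"
  by (rule smooth2_alg_imp_smooth2_on) (auto intro: smooth2_alg.intros)

lemma smooth2_on_divide:
  "open D \<Longrightarrow> smooth2_on D f \<Longrightarrow> smooth2_on D g \<Longrightarrow> (\<And>q. q \<in> D \<Longrightarrow> g q \<noteq> 0) \<Longrightarrow>
   smooth2_on D (\<lambda>q. f q / g q)"
  by (rule smooth2_alg_imp_smooth2_on) (auto intro: smooth2_alg.intros)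

lemma smooth2_on_sqrt_abs:
  "open D \<Longrightarrow> smooth2_on D f \<Longrightarrow> (\<And>q. q \<in> D \<Longrightarrow> f q \<noteq> 0) \<Longrightarrow>
   smooth2_on D (\<lambda>q. sqrt \<bar>f q\<bar>)"
  by (rule smooth2_alg_imp_smooth2_on) (auto intro: smooth2_alg.intros)

lemma smooth2_on_px: "smooth2_on D f \<Longrightarrow> smooth2_on D (px f)"
  using smooth2_on_partial[of D f True] by (simp add: partial_def)

lemma smooth2_on_pt: "smooth2_on D f \<Longrightarrow> smooth2_on D (pt f)"
  using smooth2_on_partial[of D f False] by (simp add: partial_def)

lemma smooth2_on_imp_continuous_on: "smooth2_on D f \<Longrightarrow> continuous_on D f"
  unfolding smooth2_on_def by (metis dop.simps(1))

lemma has_px: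
  assumes "smooth2_on D f" "(x, t) \<in> D"
  shows "((\<lambda>y. f (y, t)) has_real_derivative px f (x, t)) (at x)"
proof -
  have "(\<lambda>y. f (y, t)) differentiable (at x)"
    using assms unfolding smooth2_on_def by (metis dop.simps(1) fst_conv snd_conv)
  then show ?thesis
    unfolding px_def by (simp add: DERIV_deriv_iff_real_differentiable)
qed

lemma has_pt:
  assumes "smooth2_on D f" "(x, t) \<in> D"
  shows "((\<lambda>s. f (x, s)) has_real_derivative pt f (x, t)) (at t)"
proof -
  have "(\<lambda>s. f (x, s)) differentiable (at t)"
    using assms unfolding smooth2_on_def by (metis dop.simps(1) fst_conv snd_conv)
  then show ?thesis
    unfolding pt_def by (simp add: DERIV_deriv_iff_real_differentiable)
qed

lemma px_eqI: "((\<lambda>y. f (y, t)) has_real_derivative d) (at x) \<Longrightarrow> px f (x, t) = d"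
  unfolding px_def by (simp add: DERIV_imp_deriv)

lemma pt_eqI: "((\<lambda>s. f (x, s)) has_real_derivative d) (at t) \<Longrightarrow> pt f (x, t) = d"
  unfolding pt_def by (simp add: DERIV_imp_deriv)

lemma px_cong: "open D \<Longrightarrow> q \<in> D \<Longrightarrow> (\<And>r. r \<in> D \<Longrightarrow> f r = g r) \<Longrightarrow> px f q = px g q"
  using partial_cong[of D q f g True] by (simp add: partial_def)

lemma pt_cong: "open D \<Longrightarrow> q \<in> D \<Longrightarrow> (\<And>r. r \<in> D \<Longrightarrow> f r = g r) \<Longrightarrow> pt f q = pt g q"
  using partial_cong[of D q f g False] by (simp add: partial_def)

lemma px_mult:
  "smooth2_on D f \<Longrightarrow> smooth2_on D g \<Longrightarrow> q \<in> D \<Longrightarrow>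
   px (\<lambda>r. f r * g r) q = px f q * g q + f q * px g q"
  by (cases q) (auto intro!: px_eqI derivative_eq_intros has_px)

lemma dist_box_le:
  fixes x t h :: real
  assumes "0 \<le> y - x" "y - x \<le> h" "0 \<le> s - t" "s - t \<le> h"
  shows "dist (y, s) (x, t) \<le> 2 * h"
proof -
  have "dist (y, s) (x, t) = sqrt ((dist y x)\<^sup>2 + (dist s t)\<^sup>2)" by (rule dist_Pair_Pair)
  also have "\<dots> \<le> \<bar>dist y x\<bar> + \<bar>dist s t\<bar>" by (rule sqrt_sum_squares_le_sum_abs)
  also have "\<dots> \<le> 2 * h" using assms by (simp add: dist_real_def)
  finally show ?thesis .
qed

lemma second_difference_pt_px:
  assumes f: "smooth2_on D f" and "0 < h"
    and box: "\<And>y s. x \<le> y \<Longrightarrow> y \<le> x + h \<Longrightarrow> t \<le> s \<Longrightarrow> s \<le> t + h \<Longrightarrow> (y, s) \<in> D"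
  obtains \<xi> \<eta> where "x < \<xi>" "\<xi> < x + h" "t < \<eta>" "\<eta> < t + h"
    "f (x + h, t + h) - f (x + h, t) - f (x, t + h) + f (x, t) = h * h * pt (px f) (\<xi>, \<eta>)"
proof -
  have "((\<lambda>y. f (y, t + h) - f (y, t)) has_real_derivative px f (y, t + h) - px f (y, t)) (at y)"
    if "x \<le> y" "y \<le> x + h" for y
    using that \<open>0 < h\<close> by (intro DERIV_diff has_px[OF f] box) auto
  then obtain \<xi> where \<xi>: "x < \<xi>" "\<xi> < x + h"
    and \<xi>_eq: "(f (x + h, t + h) - f (x + h, t)) - (f (x, t + h) - f (x, t))
      = h * (px f (\<xi>, t + h) - px f (\<xi>, t))"
    using MVT2[of x "x + h"] \<open>0 < h\<close> by force
  have "((\<lambda>s. px f (\<xi>, s)) has_real_derivative pt (px f) (\<xi>, s)) (at s)"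
    if "t \<le> s" "s \<le> t + h" for s
    using that \<xi> by (intro has_pt[OF smooth2_on_px[OF f]] box) auto
  then obtain \<eta> where "t < \<eta>" "\<eta> < t + h"
    and "px f (\<xi>, t + h) - px f (\<xi>, t) = h * pt (px f) (\<xi>, \<eta>)"
    using MVT2[of t "t + h"] \<open>0 < h\<close> by force
  with \<xi> \<xi>_eq show ?thesis
    by (intro that[of \<xi> \<eta>]) (auto simp: algebra_simps)
qed

lemma second_difference_px_pt:
  assumes f: "smooth2_on D f" and "0 < h"
    and box: "\<And>y s. x \<le> y \<Longrightarrow> y \<le> x + h \<Longrightarrow> t \<le> s \<Longrightarrow> s \<le> t + h \<Longrightarrow> (y, s) \<in> D"
  obtains \<xi> \<eta> where "x < \<xi>" "\<xi> < x + h" "t < \<eta>" "\<eta> < t + h"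
    "f (x + h, t + h) - f (x + h, t) - f (x, t + h) + f (x, t) = h * h * px (pt f) (\<xi>, \<eta>)"
proof -
  have "((\<lambda>s. f (x + h, s) - f (x, s)) has_real_derivative pt f (x + h, s) - pt f (x, s)) (at s)"
    if "t \<le> s" "s \<le> t + h" for s
    using that \<open>0 < h\<close> by (intro DERIV_diff has_pt[OF f] box) auto
  then obtain \<eta> where \<eta>: "t < \<eta>" "\<eta> < t + h"
    and \<eta>_eq: "(f (x + h, t + h) - f (x, t + h)) - (f (x + h, t) - f (x, t))
      = h * (pt f (x + h, \<eta>) - pt f (x, \<eta>))"
    using MVT2[of t "t + h"] \<open>0 < h\<close> by force
  have "((\<lambda>y. pt f (y, \<eta>)) has_real_derivative px (pt f) (y, \<eta>)) (at y)"
    if "x \<le> y" "y \<le> x + h" for y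
    using that \<eta> by (intro has_px[OF smooth2_on_pt[OF f]] box) auto
  then obtain \<xi> where "x < \<xi>" "\<xi> < x + h"
    and "pt f (x + h, \<eta>) - pt f (x, \<eta>) = h * px (pt f) (\<xi>, \<eta>)"
    using MVT2[of x "x + h"] \<open>0 < h\<close> by force
  with \<eta> \<eta>_eq show ?thesis
    by (intro that[of \<xi> \<eta>]) (auto simp: algebra_simps)
qed

lemma mixed_partials_meet_in_box:
  assumes f: "smooth2_on D f" and "0 < h"
    and box: "\<And>y s. x \<le> y \<Longrightarrow> y \<le> x + h \<Longrightarrow> t \<le> s \<Longrightarrow> s \<le> t + h \<Longrightarrow> (y, s) \<in> D"
  obtains \<xi> \<eta> \<xi>' \<eta>' where "x < \<xi>" "\<xi> < x + h" "t < \<eta>" "\<eta> < t + h"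
    "x < \<xi>'" "\<xi>' < x + h" "t < \<eta>'" "\<eta>' < t + h"
    "pt (px f) (\<xi>, \<eta>) = px (pt f) (\<xi>', \<eta>')"
proof -
  obtain \<xi> \<eta> where "x < \<xi>" "\<xi> < x + h" "t < \<eta>" "\<eta> < t + h"
    and \<Delta>1: "f (x + h, t + h) - f (x + h, t) - f (x, t + h) + f (x, t) = h * h * pt (px f) (\<xi>, \<eta>)"
    using box by (rule second_difference_pt_px[OF f \<open>0 < h\<close>])
  moreover obtain \<xi>' \<eta>' where "x < \<xi>'" "\<xi>' < x + h" "t < \<eta>'" "\<eta>' < t + h"
    and \<Delta>2: "f (x + h, t + h) - f (x + h, t) - f (x, t + h) + f (x, t) = h * h * px (pt f) (\<xi>', \<eta>')"
    using box by (rule second_difference_px_pt[OF f \<open>0 < h\<close>])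
  moreover have "pt (px f) (\<xi>, \<eta>) = px (pt f) (\<xi>', \<eta>')"
    using \<Delta>1 \<Delta>2 \<open>0 < h\<close> by simp
  ultimately show ?thesis
    using that by blast
qed

(* Both mixed partials take a common value at points arbitrarily close to q. *)
lemma pt_px_commute:
  assumes "open D" and f: "smooth2_on D f" and "q \<in> D"
  shows "pt (px f) q = px (pt f) q"
proof -
  obtain x t where q: "q = (x, t)" by fastforce
  have cont: "isCont (pt (px f)) q" "isCont (px (pt f)) q"
    using assms continuous_on_eq_continuous_at smooth2_on_imp_continuous_on
      smooth2_on_px smooth2_on_pt by metis+
  have "\<bar>pt (px f) q - px (pt f) q\<bar> \<le> e" if "e > 0" for e
  proof -
    have "\<forall>\<^sub>F r in nhds q. r \<in> D \<and> \<bar>pt (px f) r - pt (px f) q\<bar> < e / 2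
        \<and> \<bar>px (pt f) r - px (pt f) q\<bar> < e / 2"
      unfolding eventually_nhds_conv_at
      using eventually_at_in_open'[OF \<open>open D\<close> \<open>q \<in> D\<close>] \<open>q \<in> D\<close> \<open>e > 0\<close>
        cont[unfolded isCont_def, THEN tendstoD, of "e / 2"]
      by (auto intro!: eventually_conj simp: dist_real_def)
    then obtain d where "d > 0" and d: "\<And>r. dist r q < d \<Longrightarrow> r \<in> D \<and>
        \<bar>pt (px f) r - pt (px f) q\<bar> < e / 2 \<and> \<bar>px (pt f) r - px (pt f) q\<bar> < e / 2"
      unfolding eventually_nhds_metric by blast
    have near: "(y, s) \<in> D \<and> \<bar>pt (px f) (y, s) - pt (px f) q\<bar> < e / 2
        \<and> \<bar>px (pt f) (y, s) - px (pt f) q\<bar> < e / 2"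
      if "x \<le> y" "y \<le> x + d / 4" "t \<le> s" "s \<le> t + d / 4" for y s
    proof (rule d)
      have "dist (y, s) q \<le> 2 * (d / 4)"
        unfolding q by (rule dist_box_le) (use that in auto)
      then show "dist (y, s) q < d"
        using \<open>d > 0\<close> by simp
    qed
    obtain \<xi> \<eta> \<xi>' \<eta>' where "x < \<xi>" "\<xi> < x + d / 4" "t < \<eta>" "\<eta> < t + d / 4"
      "x < \<xi>'" "\<xi>' < x + d / 4" "t < \<eta>'" "\<eta>' < t + d / 4"
      and meet: "pt (px f) (\<xi>, \<eta>) = px (pt f) (\<xi>', \<eta>')"
      using mixed_partials_meet_in_box[OF f, of "d / 4"] near \<open>d > 0\<close> by (metis divide_pos_pos zero_less_numeral)
    then have "\<bar>pt (px f) (\<xi>, \<eta>) - pt (px f) q\<bar> < e / 2" "\<bar>px (pt f) (\<xi>', \<eta>') - px (pt f) q\<bar> < e / 2"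
      using near[of \<xi> \<eta>] near[of \<xi>' \<eta>'] by auto
    with meet show ?thesis
      by arith
  qed
  then show ?thesis
    using dense_eq0_I[of "pt (px f) q - px (pt f) q"] by simp
qed
lemma convex_slice_fst:
  fixes S :: "('a::real_vector \<times> 'b::real_vector) set"
  shows "convex S \<Longrightarrow> convex {y. (y, t) \<in> S}"
proof (unfold convex_alt, safe)
  fix y z :: 'a and u :: real
  assume "\<forall>x\<in>S. \<forall>y\<in>S. \<forall>u. 0 \<le> u \<and> u \<le> 1 \<longrightarrow> (1 - u) *\<^sub>R x + u *\<^sub>R y \<in> S"
    "(y, t) \<in> S" "(z, t) \<in> S" "0 \<le> u" "u \<le> 1"
  then have "(1 - u) *\<^sub>R (y, t) + u *\<^sub>R (z, t) \<in> S" by blast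
  then show "((1 - u) *\<^sub>R y + u *\<^sub>R z, t) \<in> S"
    by (simp add: algebra_simps)
qed

lemma convex_slice_snd:
  fixes S :: "('a::real_vector \<times> 'b::real_vector) set"
  shows "convex S \<Longrightarrow> convex {s. (x, s) \<in> S}"
proof (unfold convex_alt, safe)
  fix s r :: 'b and u :: real
  assume "\<forall>x\<in>S. \<forall>y\<in>S. \<forall>u. 0 \<le> u \<and> u \<le> 1 \<longrightarrow> (1 - u) *\<^sub>R x + u *\<^sub>R y \<in> S"
    "(x, s) \<in> S" "(x, r) \<in> S" "0 \<le> u" "u \<le> 1"
  then have "(1 - u) *\<^sub>R (x, s) + u *\<^sub>R (x, r) \<in> S" by blast
  then show "(x, (1 - u) *\<^sub>R s + u *\<^sub>R r) \<in> S"
    by (simp add: algebra_simps)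
qed

lemma px_pt_zero_imp_locally_constant:
  assumes "open D" and g: "smooth2_on D g"
    and px0: "\<And>q. q \<in> D \<Longrightarrow> px g q = 0" and pt0: "\<And>q. q \<in> D \<Longrightarrow> pt g q = 0"
  shows "\<forall>a\<in>D. eventually (\<lambda>b. g a = g b) (at a within D)"
proof
  fix a assume "a \<in> D"
  obtain r where "r > 0" and ball: "ball a r \<subseteq> D"
    using \<open>open D\<close> \<open>a \<in> D\<close> by (rule openE)
  have dx: "((\<lambda>y. g (y, t)) has_real_derivative 0) (at y)"
    and dt: "((\<lambda>s. g (y, s)) has_real_derivative 0) (at t)" if "(y, t) \<in> ball a r" for y t
    using has_px[OF g] has_pt[OF g] px0 pt0 ball that by (metis subsetD)+
  have slice_x: "g (y, t) = g (y', t)" if "(y, t) \<in> ball a r" "(y', t) \<in> ball a r" for y y' t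
  proof -
    have "\<exists>c. \<forall>z\<in>{z. (z, t) \<in> ball a r}. g (z, t) = c"
      by (intro has_field_derivative_zero_constant convex_slice_fst)
        (blast intro: has_field_derivative_at_within dx)+
    then show ?thesis using that by auto
  qed
  have slice_t: "g (y, t) = g (y, t')" if "(y, t) \<in> ball a r" "(y, t') \<in> ball a r" for y t t'
  proof -
    have "\<exists>c. \<forall>s\<in>{s. (y, s) \<in> ball a r}. g (y, s) = c"
      by (intro has_field_derivative_zero_constant convex_slice_snd)
        (blast intro: has_field_derivative_at_within dt)+
    then show ?thesis using that by auto
  qed
  have "g a = g b" if "b \<in> ball a r" for b
  proof -
    obtain x t y s where ab: "a = (x, t)" "b = (y, s)" by fastforce
    have "dist (y, t) (x, t) \<le> dist (y, s) (x, t)"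
      by (simp add: dist_Pair_Pair real_sqrt_le_mono)
    then have "(y, t) \<in> ball a r"
      using that ab by (simp add: dist_commute)
    then show ?thesis
      using slice_x[of x t y] slice_t[of y t s] that ab \<open>r > 0\<close> by simp
  qed
  then show "eventually (\<lambda>b. g a = g b) (at a within D)"
    using \<open>r > 0\<close> unfolding eventually_at by (metis dist_commute mem_ball)
qed

lemma px_pt_zero_imp_constant:
  assumes "open D" "connected D" "smooth2_on D g"
    and "\<And>q. q \<in> D \<Longrightarrow> px g q = 0" "\<And>q. q \<in> D \<Longrightarrow> pt g q = 0"
  obtains c where "\<And>q. q \<in> D \<Longrightarrow> g q = c"
  using connected_local_const[OF \<open>connected D\<close> _ _ px_pt_zero_imp_locally_constant[OF assms(1,3-5)]]
  by metis

locale regular_phase =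
  fixes \<phi> :: "real \<times> real \<Rightarrow> real" and D :: "(real \<times> real) set"
  assumes open_D: "open D"
    and smooth_phase: "smooth2_on D \<phi>"
    and px_phase_nonzero: "\<And>q. q \<in> D \<Longrightarrow> px \<phi> q \<noteq> 0"
begin

definition scale :: "real \<times> real \<Rightarrow> real" where
  "scale q = sqrt \<bar>px \<phi> q\<bar>"

(* speed = lam * p in the notation of the theorem. *)
definition speed :: "real \<times> real \<Rightarrow> real" where
  "speed q = pt \<phi> q / px \<phi> q"

definition slope :: "(real \<times> real \<Rightarrow> real) \<Rightarrow> real \<times> real \<Rightarrow> real" where
  "slope W q = px W q / px \<phi> q"

lemma smooth2_on_scale: "smooth2_on D scale"
  unfolding scale_def[abs_def]
  using open_D smooth_phase px_phase_nonzero by (intro smooth2_on_sqrt_abs smooth2_on_px)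

lemma scale_nonzero: "q \<in> D \<Longrightarrow> scale q \<noteq> 0"
  using px_phase_nonzero by (simp add: scale_def)

lemma smooth2_on_speed: "smooth2_on D speed"
  unfolding speed_def[abs_def]
  using open_D smooth_phase px_phase_nonzero by (intro smooth2_on_divide smooth2_on_px smooth2_on_pt)

lemma has_px_scale:
  "(x, t) \<in> D \<Longrightarrow> ((\<lambda>y. scale (y, t)) has_real_derivative
     scale (x, t) * px (px \<phi>) (x, t) / (2 * px \<phi> (x, t))) (at x)"
  unfolding scale_def
  using DERIV_chain2[OF DERIV_sqrt_abs has_px[OF smooth2_on_px[OF smooth_phase]]] px_phase_nonzero
  by (simp add: field_simps)

lemma has_pt_scale:
  "(x, t) \<in> D \<Longrightarrow> ((\<lambda>s. scale (x, s)) has_real_derivative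
     scale (x, t) * pt (px \<phi>) (x, t) / (2 * px \<phi> (x, t))) (at t)"
  unfolding scale_def
  using DERIV_chain2[OF DERIV_sqrt_abs has_pt[OF smooth2_on_px[OF smooth_phase]]] px_phase_nonzero
  by (simp add: field_simps)

lemma smooth2_on_slope: "smooth2_on D W \<Longrightarrow> smooth2_on D (slope W)"
  unfolding slope_def[abs_def]
  using open_D smooth_phase px_phase_nonzero by (intro smooth2_on_divide smooth2_on_px)

lemma pt_phase: "pt \<phi> q = speed q * px \<phi> q" if "q \<in> D"
  using px_phase_nonzero[OF that] by (simp add: speed_def)

lemma pt_px_phase:
  assumes "q \<in> D"
  shows "pt (px \<phi>) q = px speed q * px \<phi> q + speed q * px (px \<phi>) q"
proof -
  have "pt (px \<phi>) q = px (pt \<phi>) q"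
    by (rule pt_px_commute[OF open_D smooth_phase assms])
  also have "\<dots> = px (\<lambda>r. speed r * px \<phi> r) q"
    by (rule px_cong[OF open_D assms]) (rule pt_phase)
  also have "\<dots> = px speed q * px \<phi> q + speed q * px (px \<phi>) q"
    by (rule px_mult[OF smooth2_on_speed smooth2_on_px[OF smooth_phase] assms])
  finally show ?thesis .
qed

lemma px_gauge:
  assumes V: "smooth2_on D V" and "q \<in> D"
  shows "px (\<lambda>r. V r * scale r) q = scale q * (px V q + V q * px (px \<phi>) q / (2 * px \<phi> q))"
proof (cases q)
  case (Pair x t)
  show ?thesis
    using assms px_phase_nonzero[OF \<open>q \<in> D\<close>] unfolding Pair
    by (intro px_eqI) (auto intro!: derivative_eq_intros has_px[OF V] has_px_scale simp: field_simps)
qed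

lemma px_slope_gauge:
  assumes V: "smooth2_on D V" and "q \<in> D"
  shows "px (slope (\<lambda>r. V r * scale r)) q
    = scale q / px \<phi> q * (px (px V) q + 1/2 * schwarzian \<phi> q * V q)"
proof (cases q)
  case (Pair x t)
  have "px (slope (\<lambda>r. V r * scale r)) q
      = px (\<lambda>r. scale r * (px V r + V r * px (px \<phi>) r / (2 * px \<phi> r)) / px \<phi> r) q"
    by (rule px_cong[OF open_D \<open>q \<in> D\<close>]) (simp add: slope_def px_gauge[OF V])
  also have "\<dots> = scale q / px \<phi> q * (px (px V) q + 1/2 * schwarzian \<phi> q * V q)"
    using assms px_phase_nonzero[OF \<open>q \<in> D\<close>] unfolding Pair
    by (intro px_eqI) (auto intro!: derivative_eq_intros has_px has_px_scale V smooth2_on_px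
        smooth_phase simp: schwarzian_def field_simps power2_eq_square)
  finally show ?thesis .
qed

lemma pt_gauge:
  assumes V: "smooth2_on D V" and "q \<in> D"
  shows "pt (\<lambda>r. V r * scale r) q - speed q * px (\<lambda>r. V r * scale r) q
    = scale q * (pt V q - speed q * px V q + 1/2 * px speed q * V q)"
proof (cases q)
  case (Pair x t)
  have pt_W: "pt (\<lambda>r. V r * scale r) q
      = pt V q * scale q + V q * (scale q * pt (px \<phi>) q / (2 * px \<phi> q))"
    using assms unfolding Pair by (intro pt_eqI) (auto intro!: derivative_eq_intros has_pt has_pt_scale)
  show ?thesis
    unfolding pt_W px_gauge[OF assms] pt_px_phase[OF \<open>q \<in> D\<close>]
    using px_phase_nonzero[OF \<open>q \<in> D\<close>]
    by (simp add: field_simps)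
qed

lemma pt_slope_eq_zero:
  assumes W: "smooth2_on D W" and "q \<in> D"
    and transport: "\<And>r. r \<in> D \<Longrightarrow> pt W r = speed r * px W r"
    and flat: "\<And>r. r \<in> D \<Longrightarrow> px (slope W) r = 0"
  shows "pt (slope W) q = 0"
proof (cases q)
  case (Pair x t)
  have "px (px W) q = px (\<lambda>r. slope W r * px \<phi> r) q"
    by (rule px_cong[OF open_D \<open>q \<in> D\<close>]) (simp add: slope_def px_phase_nonzero)
  also have "\<dots> = slope W q * px (px \<phi>) q"
    using px_mult[OF smooth2_on_slope[OF W] smooth2_on_px[OF smooth_phase] \<open>q \<in> D\<close>] flat[OF \<open>q \<in> D\<close>]
    by simp
  finally have pxx_W: "px (px W) q = slope W q * px (px \<phi>) q" .
  have "pt (px W) q = px (pt W) q"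
    by (rule pt_px_commute[OF open_D W \<open>q \<in> D\<close>])
  also have "\<dots> = px (\<lambda>r. speed r * px W r) q"
    by (rule px_cong[OF open_D \<open>q \<in> D\<close> transport])
  also have "\<dots> = px speed q * px W q + speed q * px (px W) q"
    by (rule px_mult[OF smooth2_on_speed smooth2_on_px[OF W] \<open>q \<in> D\<close>])
  finally have ptx_W: "pt (px W) q = px speed q * px W q + speed q * px (px W) q" .
  have "pt (slope W) q = (pt (px W) q * px \<phi> q - px W q * pt (px \<phi>) q) / (px \<phi> q * px \<phi> q)"
    using \<open>q \<in> D\<close> px_phase_nonzero[OF \<open>q \<in> D\<close>] unfolding Pair slope_def[abs_def]
    by (intro pt_eqI) (auto intro!: derivative_eq_intros has_pt smooth2_on_px W smooth_phase)
  then show ?thesis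
    unfolding ptx_W pxx_W pt_px_phase[OF \<open>q \<in> D\<close>] using px_phase_nonzero[OF \<open>q \<in> D\<close>]
    by (simp add: slope_def field_simps)
qed

lemma transport_imp_affine:
  assumes "connected D" and W: "smooth2_on D W"
    and flat: "\<And>q. q \<in> D \<Longrightarrow> px (slope W) q = 0"
    and transport: "\<And>q. q \<in> D \<Longrightarrow> pt W q = speed q * px W q"
  obtains A B where "\<And>q. q \<in> D \<Longrightarrow> W q = A * \<phi> q + B"
proof -
  obtain A where A: "\<And>q. q \<in> D \<Longrightarrow> slope W q = A"
    using px_pt_zero_imp_constant[OF open_D \<open>connected D\<close> smooth2_on_slope[OF W] flat
        pt_slope_eq_zero[OF W _ transport flat]] by metis
  then have px_W: "px W q = A * px \<phi> q" if "q \<in> D" for q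
    using A[OF that] px_phase_nonzero[OF that] by (simp add: slope_def field_simps)
  define B where "B = (\<lambda>q. W q - A * \<phi> q)"
  have "px B q = 0" if "q \<in> D" for q
    using that px_W[OF that] unfolding B_def
    by (cases q) (auto intro!: px_eqI derivative_eq_intros has_px W smooth_phase)
  moreover have "pt B q = 0" if "q \<in> D" for q
    using that transport[OF that] px_W[OF that] pt_phase[OF that] unfolding B_def
    by (cases q) (auto intro!: pt_eqI derivative_eq_intros has_pt W smooth_phase)
  moreover have "smooth2_on D B"
    unfolding B_def using open_D W smooth_phase
    by (intro smooth2_on_diff smooth2_on_mult smooth2_on_const)
  ultimately obtain c where "\<And>q. q \<in> D \<Longrightarrow> B q = c"
    using px_pt_zero_imp_constant[OF open_D \<open>connected D\<close>] by metis
  then show ?thesis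
    using that[of A c] unfolding B_def by (simp add: algebra_simps)
qed

lemma affine_imp_transport:
  assumes affine: "\<And>q. q \<in> D \<Longrightarrow> W q = A * \<phi> q + B" and "q \<in> D"
  shows "px (slope W) q = 0" and "pt W q = speed q * px W q"
proof -
  have px_W: "px W r = A * px \<phi> r" and pt_W: "pt W r = A * pt \<phi> r" if "r \<in> D" for r
  proof -
    have "px W r = px (\<lambda>r. A * \<phi> r + B) r" "pt W r = pt (\<lambda>r. A * \<phi> r + B) r"
      using px_cong[OF open_D that affine] pt_cong[OF open_D that affine] by auto
    then show "px W r = A * px \<phi> r" "pt W r = A * pt \<phi> r"
      using that by (cases r, auto intro!: px_eqI pt_eqI derivative_eq_intros has_px has_pt smooth_phase)+
  qed
  have "px (slope W) q = px (\<lambda>r. A) q"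
    by (rule px_cong[OF open_D \<open>q \<in> D\<close>]) (simp add: slope_def px_W px_phase_nonzero)
  then show "px (slope W) q = 0"
    by (cases q) (auto intro!: px_eqI)
  show "pt W q = speed q * px W q"
    using \<open>q \<in> D\<close> by (simp add: px_W pt_W pt_phase)
qed

lemma transport_iff_affine:
  assumes "connected D" and W: "smooth2_on D W"
  shows "(\<forall>q\<in>D. px (slope W) q = 0 \<and> pt W q = speed q * px W q)
    \<longleftrightarrow> (\<exists>A B. \<forall>q\<in>D. W q = A * \<phi> q + B)"
proof
  assume "\<forall>q\<in>D. px (slope W) q = 0 \<and> pt W q = speed q * px W q"
  then have "\<And>q. q \<in> D \<Longrightarrow> px (slope W) q = 0" "\<And>q. q \<in> D \<Longrightarrow> pt W q = speed q * px W q"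
    by auto
  then obtain A B where "\<And>q. q \<in> D \<Longrightarrow> W q = A * \<phi> q + B"
    using transport_imp_affine[OF assms] by blast
  then show "\<exists>A B. \<forall>q\<in>D. W q = A * \<phi> q + B" by blast
next
  assume "\<exists>A B. \<forall>q\<in>D. W q = A * \<phi> q + B"
  then obtain A B where "\<And>q. q \<in> D \<Longrightarrow> W q = A * \<phi> q + B" by blast
  then show "\<forall>q\<in>D. px (slope W) q = 0 \<and> pt W q = speed q * px W q"
    using affine_imp_transport[of W A B] by blast
qed

lemma lax_pair_iff_gauge_transport:
  assumes V: "smooth2_on D V" and "q \<in> D"
  shows "(px (px V) q + 1/2 * schwarzian \<phi> q * V q = 0 \<and>
          pt V q = speed q * px V q - 1/2 * px speed q * V q)
    \<longleftrightarrow> (px (slope (\<lambda>r. V r * scale r)) q = 0 \<and>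
         pt (\<lambda>r. V r * scale r) q = speed q * px (\<lambda>r. V r * scale r) q)"
proof -
  let ?W = "\<lambda>r. V r * scale r"
  have ode: "px (slope ?W) q = 0 \<longleftrightarrow> px (px V) q + 1/2 * schwarzian \<phi> q * V q = 0"
    using scale_nonzero[OF \<open>q \<in> D\<close>] px_phase_nonzero[OF \<open>q \<in> D\<close>]
    by (simp add: px_slope_gauge[OF assms])
  have "pt ?W q = speed q * px ?W q
      \<longleftrightarrow> scale q * (pt V q - speed q * px V q + 1/2 * px speed q * V q) = 0"
    unfolding pt_gauge[OF assms, symmetric] by (rule iffI; linarith)
  also have "\<dots> \<longleftrightarrow> pt V q - speed q * px V q + 1/2 * px speed q * V q = 0"
    using scale_nonzero[OF \<open>q \<in> D\<close>] by simp
  also have "\<dots> \<longleftrightarrow> pt V q = speed q * px V q - 1/2 * px speed q * V q"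
    by (rule iffI; linarith)
  finally show ?thesis
    using ode by blast
qed

lemma lax_pair_iff_affine:
  assumes "connected D" and V: "smooth2_on D V"
  shows "(\<forall>q\<in>D. px (px V) q + 1/2 * schwarzian \<phi> q * V q = 0 \<and>
                 pt V q = speed q * px V q - 1/2 * px speed q * V q)
    \<longleftrightarrow> (\<exists>A B. \<forall>q\<in>D. V q = (A * \<phi> q + B) / scale q)"
proof -
  have "(\<forall>q\<in>D. px (px V) q + 1/2 * schwarzian \<phi> q * V q = 0 \<and>
                 pt V q = speed q * px V q - 1/2 * px speed q * V q)
    \<longleftrightarrow> (\<forall>q\<in>D. px (slope (\<lambda>r. V r * scale r)) q = 0 \<and>
         pt (\<lambda>r. V r * scale r) q = speed q * px (\<lambda>r. V r * scale r) q)"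
    using lax_pair_iff_gauge_transport[OF V] by blast
  also have "\<dots> \<longleftrightarrow> (\<exists>A B. \<forall>q\<in>D. V q * scale q = A * \<phi> q + B)"
    by (rule transport_iff_affine[OF \<open>connected D\<close> smooth2_on_mult[OF open_D V smooth2_on_scale]])
  also have "\<dots> \<longleftrightarrow> (\<exists>A B. \<forall>q\<in>D. V q = (A * \<phi> q + B) / scale q)"
    using scale_nonzero by (simp add: eq_divide_eq)
  finally show ?thesis .
qed

lemma affine_over_scale_eq_zero_iff:
  assumes "D \<noteq> {}"
  shows "(\<forall>q\<in>D. (A * \<phi> q + B) / scale q = 0) \<longleftrightarrow> A = 0 \<and> B = 0"
proof
  assume "\<forall>q\<in>D. (A * \<phi> q + B) / scale q = 0"
  then have zero: "\<And>q. q \<in> D \<Longrightarrow> A * \<phi> q + B = 0"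
    using scale_nonzero by simp
  obtain x t where "(x, t) \<in> D"
    using assms by auto
  have "A * px \<phi> (x, t) = px (\<lambda>r. A * \<phi> r + B) (x, t)"
    using \<open>(x, t) \<in> D\<close> by (auto intro!: px_eqI[symmetric] derivative_eq_intros has_px smooth_phase)
  also have "\<dots> = px (\<lambda>r. 0) (x, t)"
    by (rule px_cong[OF open_D \<open>(x, t) \<in> D\<close> zero])
  also have "\<dots> = 0"
    by (rule px_eqI) simp
  finally have "A = 0"
    using px_phase_nonzero[OF \<open>(x, t) \<in> D\<close>] by simp
  then show "A = 0 \<and> B = 0"
    using zero[OF \<open>(x, t) \<in> D\<close>] by simp
qed simp

end

theorem mainTheorem6:
  fixes \<phi> V :: "real \<times> real \<Rightarrow> real" and lam :: real and D :: "(real \<times> real) set"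
  assumes "lam \<noteq> 0"
    and "open D" and "connected D" and "D \<noteq> {}"
    and "smooth2_on D \<phi>"
    and "\<forall>q\<in>D. px \<phi> q \<noteq> 0"
    and "\<forall>q\<in>D. pt (schwarzian \<phi>) q
                + 4 / lam * px (\<lambda>r. pt \<phi> r / px \<phi> r) q = 0"
    and "smooth2_on D V"
  shows "((let p = (\<lambda>r. pt \<phi> r / (lam * px \<phi> r));
              U = (\<lambda>r. 1/2 * schwarzian \<phi> r + 1 / lam)
          in (\<forall>q\<in>D. px (px V) q + (U q - 1 / lam) * V q = 0 \<and>
                     pt V q = lam * (p q * px V q - 1/2 * px p q * V q)))
         \<longleftrightarrow> (\<exists>A B :: real. \<forall>q\<in>D. V q = (A * \<phi> q + B) / sqrt \<bar>px \<phi> q\<bar>))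
       \<and> (\<forall>A B :: real. (\<forall>q\<in>D. (A * \<phi> q + B) / sqrt \<bar>px \<phi> q\<bar> = 0)
                       \<longleftrightarrow> (A = 0 \<and> B = 0))"
proof -
  interpret regular_phase \<phi> D
    using assms by unfold_locales auto
  have p: "(\<lambda>r. pt \<phi> r / (lam * px \<phi> r)) = (\<lambda>r. speed r / lam)"
    by (simp add: speed_def fun_eq_iff)
  have "px (\<lambda>r. speed r / lam) q = px speed q / lam" if "q \<in> D" for q
    using that \<open>lam \<noteq> 0\<close>
    by (cases q) (auto intro!: px_eqI derivative_eq_intros has_px smooth2_on_speed)
  then have "lam * (speed q / lam * px V q - 1/2 * px (\<lambda>r. speed r / lam) q * V q)
      = speed q * px V q - 1/2 * px speed q * V q" if "q \<in> D" for q
    using that \<open>lam \<noteq> 0\<close> by (simp add: field_simps)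
  then show ?thesis
    unfolding Let_def p
    using lax_pair_iff_affine[OF \<open>connected D\<close> \<open>smooth2_on D V\<close>]
      affine_over_scale_eq_zero_iff[OF \<open>D \<noteq> {}\<close>]
    by (simp add: scale_def)
qed

end
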